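(* Let $X$ be a complete nonsingular toric variety which is Fano and all of whose toric subvarieties are Fano, with fan $\Delta$. Let $\langle\rho'_1,\ldots,\rho'_k\rangle$ be a cone of $\Delta$ and let $w=a_1\rho'_1+\cdots+a_k\rho'_k$ with integers $a_i\ge1$ for each $i$ and $a_1\ge2$. If $\{\rho_1,\ldots,\rho_j\}$ is any linearly independent set of ray generators of $\Delta$, then $\rho_1+\cdots+\rho_j\neq w$.
   Context: Ray generators are the primitive lattice generators of the rays of $\Delta$. *)

theory Defs
  imports "HOL-Analysis.Analysis"
begin

text \<open>Lattice N = Z^n inside N_R = R^n, with n = CARD('n).
  A fan is represented by the set of its cones, each (simplicial, since the fan
  is smooth) cone being given by the finite set of its ray generators.\<close>

definition lattice_pt :: "real^'n \<Rightarrow> bool" where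
  "lattice_pt x \<longleftrightarrow> (\<forall>i. x $ i \<in> \<int>)"

definition pos_hull :: "(real^'n) set \<Rightarrow> (real^'n) set" where
  "pos_hull S = {y. \<exists>c. (\<forall>x\<in>S. c x \<ge> 0) \<and> y = (\<Sum>x\<in>S. c x *\<^sub>R x)}"

definition int_span :: "(real^'n) set \<Rightarrow> (real^'n) set" where
  "int_span S = {y. \<exists>c. (\<forall>x\<in>S. c x \<in> \<int>) \<and> y = (\<Sum>x\<in>S. c x *\<^sub>R x)}"

definition lattice_basis :: "(real^'n) set \<Rightarrow> bool" where
  "lattice_basis B \<longleftrightarrow> finite B \<and> independent B \<and> card B = CARD('n)
      \<and> int_span B = {x. lattice_pt x}"

definition complete_smooth_fan :: "(real^'n) set set \<Rightarrow> bool" where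
  "complete_smooth_fan \<Delta> \<longleftrightarrow>
     finite \<Delta> \<and> \<Delta> \<noteq> {} \<and>
     (\<forall>\<sigma>\<in>\<Delta>. \<exists>B. lattice_basis B \<and> \<sigma> \<subseteq> B) \<and>
     (\<forall>\<sigma>\<in>\<Delta>. \<forall>\<tau>. \<tau> \<subseteq> \<sigma> \<longrightarrow> \<tau> \<in> \<Delta>) \<and>
     (\<forall>\<sigma>\<in>\<Delta>. \<forall>\<sigma>'\<in>\<Delta>. pos_hull \<sigma> \<inter> pos_hull \<sigma>' = pos_hull (\<sigma> \<inter> \<sigma>')) \<and>
     (\<Union>\<sigma>\<in>\<Delta>. pos_hull \<sigma>) = UNIV"

definition ray_gens :: "(real^'n) set set \<Rightarrow> (real^'n) set" where
  "ray_gens \<Delta> = {\<rho>. {\<rho>} \<in> \<Delta>}"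

definition maximal_cone :: "(real^'n) set set \<Rightarrow> (real^'n) set \<Rightarrow> bool" where
  "maximal_cone \<Delta> \<sigma> \<longleftrightarrow> \<sigma> \<in> \<Delta> \<and> \<not> (\<exists>\<sigma>'\<in>\<Delta>. \<sigma> \<subset> \<sigma>')"

text \<open>The torus-invariant subvariety V(tau) of the smooth complete toric variety of the
  fan has fan Star(tau) in N/N_tau.  It is Fano iff the anticanonical support function
  is strictly convex: for each maximal cone sigma containing tau there is a linear
  functional u on N/N_tau (i.e. u vanishing on tau) equal to 1 on the generators of
  sigma not in tau and < 1 on all other ray generators of Star(tau).
  For tau = {} this is the Fano condition for X itself.\<close>
definition fano_orbit_closure :: "(real^'n) set set \<Rightarrow> (real^'n) set \<Rightarrow> bool" where
  "fano_orbit_closure \<Delta> \<tau> \<longleftrightarrow>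
     (\<forall>\<sigma>. maximal_cone \<Delta> \<sigma> \<and> \<tau> \<subseteq> \<sigma> \<longrightarrow>
        (\<exists>u::real^'n. (\<forall>\<rho>\<in>\<tau>. u \<bullet> \<rho> = 0) \<and> (\<forall>\<rho>\<in>\<sigma> - \<tau>. u \<bullet> \<rho> = 1) \<and>
           (\<forall>\<rho>. \<rho> \<notin> \<sigma> \<and> insert \<rho> \<tau> \<in> \<Delta> \<longrightarrow> u \<bullet> \<rho> < 1)))"

end

theory Submission
  imports Defs
begin

(* Fix a maximal cone sigma containing the given cone; it is a lattice basis. Applying the Fano
   condition for the orbit closures V(tau) inductively, crossing one wall of sigma at a time, one
   finds that for every face tau of sigma the sigma-coordinates of a ray generator outside tau
   sum to at most 1. So a ray generator has at most one positive sigma-coordinate, and it equals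
   1. If rho_1 + ... + rho_j = w, the sum has nonnegative sigma-coordinates, so the rho_i lie in
   the span of the coordinates at which some rho_i is positive; by independence each of these
   coordinates is positive for exactly one rho_i. Hence every sigma-coordinate of the sum is at
   most 1, whereas that of w at rho'_1 is a_1 >= 2. *)

lemma lattice_basisD:
  fixes B :: "(real^'n) set"
  assumes "lattice_basis B"
  shows "finite B" "independent B" "card B = CARD('n)" "span B = UNIV"
    and "int_span B = {x. lattice_pt x}"
proof -
  show "finite B" "independent B" "card B = CARD('n)" "int_span B = {x. lattice_pt x}"
    using assms unfolding lattice_basis_def by auto
  then show "span B = UNIV"
    using card_ge_dim_independent[of B UNIV] by (auto simp: dim_UNIV)
qed

lemma representation_sum_scaleR:
  fixes B :: "'a::real_vector set"
  assumes "independent B" "finite A" "A \<subseteq> B"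
  shows "representation B (\<Sum>x\<in>A. c x *\<^sub>R x) b = (if b \<in> A then c b else 0)"
proof -
  have span: "x \<in> span B" if "x \<in> A" for x
    using that assms(3) by (auto intro: real_vector.span_base)
  have "representation B (\<Sum>x\<in>A. c x *\<^sub>R x) b = (\<Sum>x\<in>A. c x * representation B x b)"
    using assms(1) span by (simp add: real_vector.representation_sum real_vector.representation_scale
        real_vector.span_scale)
  also have "\<dots> = (\<Sum>x\<in>A. if b = x then c x else 0)"
    using assms by (intro sum.cong) (auto simp: real_vector.representation_basis)
  finally show ?thesis
    using assms(2) by simp
qed

lemma linear_representation_coord:
  fixes B :: "'a::real_vector set"
  assumes "independent B" "span B = UNIV"
  shows "linear (\<lambda>x. representation B x b)"
  using real_vector.linear_representation[OF assms, of b]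
  by (simp add: linear_def real_scaleR_def[abs_def])

lemma lattice_basis_lattice_pt:
  assumes "lattice_basis B" "b \<in> B"
  shows "lattice_pt b"
proof -
  have "(\<Sum>x\<in>B. (if x = b then 1 else 0) *\<^sub>R x) = (\<Sum>x\<in>B. if x = b then x else 0)"
    by (rule sum.cong) auto
  also have "\<dots> = b"
    using assms lattice_basisD(1)[OF assms(1)] by simp
  finally have "b = (\<Sum>x\<in>B. (if x = b then 1 else 0) *\<^sub>R x)" ..
  then have "b \<in> int_span B"
    unfolding int_span_def by (intro CollectI exI[of _ "\<lambda>x. if x = b then 1 else 0"]) auto
  then show ?thesis
    using lattice_basisD(5)[OF assms(1)] by auto
qed

lemma lattice_basis_representation_Ints:
  assumes "lattice_basis B" "lattice_pt x"
  shows "representation B x b \<in> \<int>"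
proof -
  obtain c where "\<forall>y\<in>B. c y \<in> \<int>" "x = (\<Sum>y\<in>B. c y *\<^sub>R y)"
    using assms lattice_basisD(5)[OF assms(1)] unfolding int_span_def by auto
  then show ?thesis
    using lattice_basisD[OF assms(1)] by (simp add: representation_sum_scaleR)
qed

lemma lattice_basis_exchange_coeff:
  fixes B :: "(real^'n) set"
  assumes B: "lattice_basis B" and B': "lattice_basis B'"
    and t: "t \<in> B" and "B - {t} \<subseteq> B'" and g: "g \<in> B'" "g \<notin> B"
  shows "\<bar>representation B g t\<bar> = 1"
proof -
  note LB = lattice_basisD[OF B] and LB' = lattice_basisD[OF B']
  have "card (insert g (B - {t})) = card B'"
    using LB(1,3) LB'(3) t g by (simp add: card_Diff_singleton)
  then have B'_eq: "B' = insert g (B - {t})"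
    using LB'(1) assms(4) g by (intro card_subset_eq[symmetric]) auto
  obtain m where m: "\<forall>y\<in>B'. m y \<in> \<int>" "t = (\<Sum>y\<in>B'. m y *\<^sub>R y)"
    using lattice_basis_lattice_pt[OF B t] LB'(5) unfolding int_span_def by auto
  have "1 = representation B t t"
    using LB t by (simp add: real_vector.representation_basis)
  also have "\<dots> = (\<Sum>y\<in>B'. m y * representation B y t)"
    by (subst m(2)) (simp add: LB real_vector.representation_sum real_vector.representation_scale)
  also have "\<dots> = m g * representation B g t"
    using LB g t by (simp add: B'_eq real_vector.representation_basis) (rule sum.neutral, auto)
  finally have prod: "\<bar>m g\<bar> * \<bar>representation B g t\<bar> = 1"
    by (metis abs_mult abs_one)
  have "1 \<le> \<bar>m g\<bar>" "1 \<le> \<bar>representation B g t\<bar>"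
    using m(1) g lattice_basis_representation_Ints[OF B lattice_basis_lattice_pt[OF B' g(1)]] prod
    by (auto intro!: Ints_nonzero_abs_ge1)
  then show ?thesis
    using prod mult_right_mono[of 1 "\<bar>m g\<bar>" "\<bar>representation B g t\<bar>"] by simp
qed

lemma sum_in_pos_hull: "(\<Sum>x\<in>A. x) \<in> pos_hull A"
  unfolding pos_hull_def by (auto intro!: exI[of _ "\<lambda>_. 1"])

lemma pos_hull_subset_span: "pos_hull A \<subseteq> span A"
  unfolding pos_hull_def
  by (auto intro!: real_vector.span_sum intro: real_vector.span_scale real_vector.span_base)

lemma pos_hull_mono:
  assumes "A \<subseteq> B" "finite B"
  shows "pos_hull A \<subseteq> pos_hull B"
proof
  fix y assume "y \<in> pos_hull A"
  then obtain c where c: "\<forall>x\<in>A. 0 \<le> c x" "y = (\<Sum>x\<in>A. c x *\<^sub>R x)"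
    unfolding pos_hull_def by auto
  let ?c = "\<lambda>x. if x \<in> A then c x else 0"
  have "y = (\<Sum>x\<in>B. ?c x *\<^sub>R x)"
    unfolding c(2) using assms by (intro sum.mono_neutral_cong_left) auto
  then show "y \<in> pos_hull B"
    unfolding pos_hull_def using c(1) by (intro CollectI exI[of _ ?c]) auto
qed

lemma pos_hull_eq_representation:
  fixes B :: "(real^'n) set"
  assumes B: "finite B" "independent B" "span B = UNIV" and "A \<subseteq> B"
  shows "pos_hull A =
    {x. \<forall>b\<in>B. 0 \<le> representation B x b \<and> (b \<notin> A \<longrightarrow> representation B x b = 0)}"
proof (intro set_eqI iffI)
  fix x assume "x \<in> pos_hull A"
  then obtain c where "\<forall>y\<in>A. 0 \<le> c y" "x = (\<Sum>y\<in>A. c y *\<^sub>R y)"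
    unfolding pos_hull_def by auto
  moreover have "finite A"
    using assms finite_subset by blast
  ultimately show "x \<in> {x. \<forall>b\<in>B. 0 \<le> representation B x b \<and> (b \<notin> A \<longrightarrow> representation B x b = 0)}"
    using assms by (auto simp: representation_sum_scaleR)
next
  fix x assume x: "x \<in> {x. \<forall>b\<in>B. 0 \<le> representation B x b \<and> (b \<notin> A \<longrightarrow> representation B x b = 0)}"
  have "x = (\<Sum>b\<in>B. representation B x b *\<^sub>R b)"
    using B by (simp add: real_vector.sum_representation_eq)
  also have "\<dots> = (\<Sum>b\<in>A. representation B x b *\<^sub>R b)"
    using assms x by (intro sum.mono_neutral_right) auto
  finally show "x \<in> pos_hull A"
    unfolding pos_hull_def using x assms(4) by auto
qed

lemma closed_pos_hull:
  fixes B :: "(real^'n) set"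
  assumes "finite B" "independent B" "span B = UNIV" "A \<subseteq> B"
  shows "closed (pos_hull A)"
proof -
  have "pos_hull A = (\<Inter>b\<in>B. {x. 0 \<le> representation B x b})
      \<inter> (\<Inter>b\<in>B - A. {x. representation B x b = 0})"
    unfolding pos_hull_eq_representation[OF assms] by blast
  moreover have "continuous_on UNIV (\<lambda>x. representation B x b)" for b
    using linear_representation_coord[OF assms(2,3)]
    by (simp add: linear_continuous_on linear_conv_bounded_linear)
  ultimately show ?thesis
    by (simp only:) (intro closed_Int closed_INT ballI closed_Collect_le closed_Collect_eq
        continuous_on_const; simp)
qed

lemma pos_hull_linear_le:
  fixes f g :: "real^'n \<Rightarrow> real"
  assumes "linear f" "linear g" "\<And>x. x \<in> A \<Longrightarrow> f x \<le> g x" "y \<in> pos_hull A"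
  shows "f y \<le> g y"
proof -
  obtain c where c: "\<forall>x\<in>A. 0 \<le> c x" "y = (\<Sum>x\<in>A. c x *\<^sub>R x)"
    using assms(4) unfolding pos_hull_def by auto
  have "f y = (\<Sum>x\<in>A. c x * f x)"
    using assms(1) by (simp add: c(2) real_vector.linear_sum linear_cmul)
  also have "\<dots> \<le> (\<Sum>x\<in>A. c x * g x)"
    using c(1) assms(3) by (intro sum_mono mult_left_mono) auto
  also have "\<dots> = g y"
    using assms(2) by (simp add: c(2) real_vector.linear_sum linear_cmul)
  finally show ?thesis .
qed

(* For a maximal cone sigma containing tau, height sigma tau is the functional u of
   fano_orbit_closure Delta tau: linear, 0 on tau and 1 on sigma - tau. *)
definition height :: "(real^'n) set \<Rightarrow> (real^'n) set \<Rightarrow> real^'n \<Rightarrow> real" where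
  "height \<sigma> \<tau> x = (\<Sum>b\<in>\<sigma> - \<tau>. representation \<sigma> x b)"

lemma linear_height:
  assumes "lattice_basis \<sigma>"
  shows "linear (height \<sigma> \<tau>)"
  unfolding height_def[abs_def]
  using linear_representation_coord[OF lattice_basisD(2,4)[OF assms]]
  by (intro real_vector.linear_compose_sum) auto

lemma height_basis:
  assumes "lattice_basis \<sigma>" "g \<in> \<sigma>"
  shows "height \<sigma> \<tau> g = (if g \<in> \<tau> then 0 else 1)"
  unfolding height_def real_vector.representation_basis[OF lattice_basisD(2)[OF assms(1)] assms(2)]
  using assms lattice_basisD(1)[OF assms(1)] by (simp add: sum.delta')

lemma height_Ints:
  assumes "lattice_basis \<sigma>" "lattice_pt x"
  shows "height \<sigma> \<tau> x \<in> \<int>"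
  unfolding height_def using lattice_basis_representation_Ints[OF assms] by auto

lemma height_insert:
  assumes "lattice_basis \<sigma>" "t \<in> \<sigma>" "t \<notin> \<tau>"
  shows "height \<sigma> \<tau> x = representation \<sigma> x t + height \<sigma> (insert t \<tau>) x"
proof -
  have "\<sigma> - \<tau> = insert t (\<sigma> - insert t \<tau>)"
    using assms by auto
  moreover have "finite \<sigma>"
    using lattice_basisD(1)[OF assms(1)] .
  ultimately show ?thesis
    unfolding height_def by (metis Diff_iff finite_Diff insertCI sum.insert)
qed

locale smooth_complete_fan =
  fixes \<Delta> :: "(real^'n) set set"
  assumes fan: "complete_smooth_fan \<Delta>"
begin

lemma finite_fan: "finite \<Delta>"
  and face_in_fan: "\<sigma> \<in> \<Delta> \<Longrightarrow> \<tau> \<subseteq> \<sigma> \<Longrightarrow> \<tau> \<in> \<Delta>"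
  and pos_hull_Int: "\<sigma> \<in> \<Delta> \<Longrightarrow> \<delta> \<in> \<Delta> \<Longrightarrow> pos_hull \<sigma> \<inter> pos_hull \<delta> = pos_hull (\<sigma> \<inter> \<delta>)"
  using fan unfolding complete_smooth_fan_def by blast+

lemma cone_subset_lattice_basis: "\<sigma> \<in> \<Delta> \<Longrightarrow> \<exists>B. lattice_basis B \<and> \<sigma> \<subseteq> B"
  using fan unfolding complete_smooth_fan_def by auto

lemma fan_covers: "\<exists>\<sigma>\<in>\<Delta>. x \<in> pos_hull \<sigma>"
  using fan unfolding complete_smooth_fan_def by (metis UNIV_I UN_iff)

lemma finite_cone: "\<sigma> \<in> \<Delta> \<Longrightarrow> finite \<sigma>"
  using cone_subset_lattice_basis lattice_basisD(1) finite_subset by metis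

lemma independent_cone: "\<sigma> \<in> \<Delta> \<Longrightarrow> independent \<sigma>"
  using cone_subset_lattice_basis lattice_basisD(2) independent_mono by metis

lemma lattice_pt_ray: "{\<rho>} \<in> \<Delta> \<Longrightarrow> lattice_pt \<rho>"
  using cone_subset_lattice_basis lattice_basis_lattice_pt by blast

lemma closed_pos_hull_cone: "\<sigma> \<in> \<Delta> \<Longrightarrow> closed (pos_hull \<sigma>)"
  using cone_subset_lattice_basis closed_pos_hull lattice_basisD by metis

lemma sum_cone_notin_pos_hull:
  assumes "\<gamma> \<in> \<Delta>" "\<delta> \<in> \<Delta>" "\<not> \<gamma> \<subseteq> \<delta>"
  shows "(\<Sum>x\<in>\<gamma>. x) \<notin> pos_hull \<delta>"
proof
  assume "(\<Sum>x\<in>\<gamma>. x) \<in> pos_hull \<delta>"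
  then have "(\<Sum>x\<in>\<gamma>. x) \<in> pos_hull (\<gamma> \<inter> \<delta>)"
    using sum_in_pos_hull pos_hull_Int[OF assms(1,2)] by blast
  then obtain c where c: "(\<Sum>x\<in>\<gamma>. x) = (\<Sum>x\<in>\<gamma> \<inter> \<delta>. c x *\<^sub>R x)"
    unfolding pos_hull_def by auto
  obtain b where b: "b \<in> \<gamma>" "b \<notin> \<delta>"
    using assms(3) by auto
  have fin: "finite \<gamma>" and ind: "independent \<gamma>"
    using assms(1) finite_cone independent_cone by auto
  have "representation \<gamma> (\<Sum>x\<in>\<gamma>. 1 *\<^sub>R x) b = 1"
    using representation_sum_scaleR[OF ind fin, of "\<lambda>_. 1"] b by simp
  moreover have "representation \<gamma> (\<Sum>x\<in>\<gamma> \<inter> \<delta>. c x *\<^sub>R x) b = 0"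
    using representation_sum_scaleR[OF ind, of "\<gamma> \<inter> \<delta>"] fin b by simp
  ultimately show False
    using c by simp
qed

lemma perturbed_sum_in_pos_hull:
  assumes "\<gamma> \<in> \<Delta>"
  obtains l \<delta> where "0 < l" "l \<le> 1" "\<delta> \<in> \<Delta>" "\<gamma> \<subseteq> \<delta>" "(\<Sum>x\<in>\<gamma>. x) + l *\<^sub>R d \<in> pos_hull \<delta>"
proof -
  define p where "p = (\<Sum>x\<in>\<gamma>. x)"
  define A where "A = {\<delta>\<in>\<Delta>. \<not> \<gamma> \<subseteq> \<delta>}"
  have "((\<lambda>l. p + l *\<^sub>R d) \<longlongrightarrow> p) (at_right 0)"
    by (intro tendsto_eq_intros) auto
  moreover have "open (- pos_hull \<delta>)" "p \<in> - pos_hull \<delta>" if "\<delta> \<in> A" for \<delta>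
    using that assms closed_pos_hull_cone sum_cone_notin_pos_hull
    unfolding A_def p_def by auto
  ultimately have "\<forall>\<delta>\<in>A. \<forall>\<^sub>F l in at_right 0. p + l *\<^sub>R d \<notin> pos_hull \<delta>"
    using topological_tendstoD by fastforce
  then have "\<forall>\<^sub>F l in at_right 0. \<forall>\<delta>\<in>A. p + l *\<^sub>R d \<notin> pos_hull \<delta>"
    using finite_fan by (intro eventually_ball_finite) (auto simp: A_def)
  moreover have "\<forall>\<^sub>F l in at_right 0. 0 < l \<and> l \<le> (1::real)"
    by (intro eventually_conj eventually_at_right_less)
      (auto simp: eventually_at_right_field intro: exI[of _ 1])
  ultimately obtain l where l: "0 < l" "l \<le> 1" "\<forall>\<delta>\<in>A. p + l *\<^sub>R d \<notin> pos_hull \<delta>"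
    using eventually_happens'[OF trivial_limit_at_right_real] eventually_conj by blast
  obtain \<delta> where "\<delta> \<in> \<Delta>" "p + l *\<^sub>R d \<in> pos_hull \<delta>"
    using fan_covers by blast
  with l show ?thesis
    using that unfolding A_def p_def by blast
qed

lemma ex_maximal_cone_superset:
  assumes "\<sigma> \<in> \<Delta>"
  obtains \<delta> where "maximal_cone \<Delta> \<delta>" "\<sigma> \<subseteq> \<delta>"
proof -
  have "finite {\<delta>\<in>\<Delta>. \<sigma> \<subseteq> \<delta>}" "{\<delta>\<in>\<Delta>. \<sigma> \<subseteq> \<delta>} \<noteq> {}"
    using finite_fan assms by auto
  then obtain \<delta> where \<delta>: "\<delta> \<in> \<Delta>" "\<sigma> \<subseteq> \<delta>" and max: "\<And>\<delta>'. \<delta>' \<in> \<Delta> \<Longrightarrow> \<delta> \<subseteq> \<delta>' \<Longrightarrow> \<delta> = \<delta>'"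
    using finite_has_maximal[of "{\<delta>\<in>\<Delta>. \<sigma> \<subseteq> \<delta>}"] by (metis (mono_tags, lifting) mem_Collect_eq order_trans)
  have "maximal_cone \<Delta> \<delta>"
    unfolding maximal_cone_def using \<delta>(1) max by blast
  with \<delta>(2) show ?thesis
    using that by blast
qed

lemma maximal_cone_lattice_basis:
  assumes max: "maximal_cone \<Delta> \<sigma>"
  shows "lattice_basis \<sigma>"
proof -
  have \<sigma>: "\<sigma> \<in> \<Delta>"
    using max unfolding maximal_cone_def by auto
  obtain B where B: "lattice_basis B" "\<sigma> \<subseteq> B"
    using cone_subset_lattice_basis \<sigma> by blast
  have "b \<in> \<sigma>" if b: "b \<in> B" for b
  proof (rule ccontr)
    assume "b \<notin> \<sigma>"
    obtain l \<delta> where l: "0 < l" "\<delta> \<in> \<Delta>" "\<sigma> \<subseteq> \<delta>" "(\<Sum>x\<in>\<sigma>. x) + l *\<^sub>R b \<in> pos_hull \<delta>"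
      using perturbed_sum_in_pos_hull[OF \<sigma>, of b] by blast
    have "\<delta> = \<sigma>"
      using max l(2,3) unfolding maximal_cone_def by blast
    then have "(\<Sum>x\<in>\<sigma>. x) + l *\<^sub>R b \<in> span \<sigma>"
      using l(4) pos_hull_subset_span by blast
    then have "(1 / l) *\<^sub>R (((\<Sum>x\<in>\<sigma>. x) + l *\<^sub>R b) - (\<Sum>x\<in>\<sigma>. x)) \<in> span \<sigma>"
      using sum_in_pos_hull pos_hull_subset_span
      by (blast intro: real_vector.span_scale real_vector.span_diff)
    then have "b \<in> span (B - {b})"
      using l(1) B(2) \<open>b \<notin> \<sigma>\<close> real_vector.span_mono[of \<sigma> "B - {b}"] by auto
    then show False
      using lattice_basisD(2)[OF B(1)] b real_vector.dependent_def by blast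
  qed
  then show ?thesis
    using B by (metis subsetI subset_antisym)
qed

lemma ex_maximal_cone_towards:
  assumes "\<gamma> \<in> \<Delta>"
  obtains l \<delta> where "0 < l" "l \<le> 1" "maximal_cone \<Delta> \<delta>" "\<gamma> \<subseteq> \<delta>"
    "(1 - l) *\<^sub>R (\<Sum>x\<in>\<gamma>. x) + l *\<^sub>R s \<in> pos_hull \<delta>"
proof -
  obtain l \<delta>\<^sub>0 where l: "0 < l" "l \<le> 1" and \<delta>\<^sub>0: "\<delta>\<^sub>0 \<in> \<Delta>" "\<gamma> \<subseteq> \<delta>\<^sub>0"
    and y: "(\<Sum>x\<in>\<gamma>. x) + l *\<^sub>R (s - (\<Sum>x\<in>\<gamma>. x)) \<in> pos_hull \<delta>\<^sub>0"
    by (rule perturbed_sum_in_pos_hull[OF assms])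
  obtain \<delta> where \<delta>: "maximal_cone \<Delta> \<delta>" "\<delta>\<^sub>0 \<subseteq> \<delta>"
    by (rule ex_maximal_cone_superset[OF \<delta>\<^sub>0(1)])
  have "pos_hull \<delta>\<^sub>0 \<subseteq> pos_hull \<delta>"
    using \<delta> finite_cone unfolding maximal_cone_def by (intro pos_hull_mono) auto
  moreover have "(\<Sum>x\<in>\<gamma>. x) + l *\<^sub>R (s - (\<Sum>x\<in>\<gamma>. x)) = (1 - l) *\<^sub>R (\<Sum>x\<in>\<gamma>. x) + l *\<^sub>R s"
    by (simp add: algebra_simps)
  ultimately show ?thesis
    using that[OF l \<delta>(1)] y \<delta>\<^sub>0(2) \<delta>(2) by auto
qed

end

locale hereditarily_fano_fan = smooth_complete_fan +
  assumes fano: "\<forall>\<tau>\<in>\<Delta>. fano_orbit_closure \<Delta> \<tau>"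
begin

lemma height_lt_1:
  assumes max: "maximal_cone \<Delta> \<sigma>" and "\<tau> \<subseteq> \<sigma>" "g \<notin> \<sigma>" "insert g \<tau> \<in> \<Delta>"
  shows "height \<sigma> \<tau> g < 1"
proof -
  have "\<tau> \<in> \<Delta>"
    using assms face_in_fan unfolding maximal_cone_def by blast
  then obtain u where u: "\<forall>\<rho>\<in>\<tau>. u \<bullet> \<rho> = 0" "\<forall>\<rho>\<in>\<sigma> - \<tau>. u \<bullet> \<rho> = 1" "u \<bullet> g < 1"
    using fano assms unfolding fano_orbit_closure_def by blast
  note \<sigma> = lattice_basisD[OF maximal_cone_lattice_basis[OF max]]
  have "u \<bullet> g = (\<Sum>b\<in>\<sigma>. representation \<sigma> g b * (u \<bullet> b))"
    using \<sigma> by (subst real_vector.sum_representation_eq[symmetric, of \<sigma> g \<sigma>])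
      (auto simp: inner_sum_right)
  also have "\<dots> = (\<Sum>b\<in>\<sigma> - \<tau>. representation \<sigma> g b * (u \<bullet> b)) + (\<Sum>b\<in>\<tau>. representation \<sigma> g b * (u \<bullet> b))"
    by (rule sum.subset_diff[OF assms(2) \<sigma>(1)])
  also have "\<dots> = height \<sigma> \<tau> g"
    using u unfolding height_def by simp
  finally show ?thesis
    using u(3) by simp
qed

lemma height_le_height_adjacent:
  assumes \<sigma>: "maximal_cone \<Delta> \<sigma>" and \<delta>: "maximal_cone \<Delta> \<delta>"
    and t: "insert t \<tau> \<subseteq> \<sigma>" "t \<notin> \<tau>" "\<sigma> - {t} \<subseteq> \<delta>" and g: "g \<in> \<delta>"
  shows "height \<sigma> (insert t \<tau>) g \<le> height \<delta> \<tau> g"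
proof -
  note \<sigma>_basis = maximal_cone_lattice_basis[OF \<sigma>]
    and \<delta>_basis = maximal_cone_lattice_basis[OF \<delta>]
  consider "g \<in> \<tau>" | "g \<notin> \<tau>" "g \<in> \<sigma>" | "g \<notin> \<tau>" "g \<notin> \<sigma>"
    by blast
  then show ?thesis
  proof cases
    case 1
    then have "g \<in> \<sigma>"
      using t(1) by blast
    then show ?thesis
      using 1 g by (simp add: height_basis[OF \<sigma>_basis] height_basis[OF \<delta>_basis])
  next
    case 2
    then show ?thesis
      using g by (simp add: height_basis[OF \<sigma>_basis] height_basis[OF \<delta>_basis])
  next
    case 3
    have "insert g \<tau> \<subseteq> \<delta>"
      using t g by blast
    then have "insert g \<tau> \<in> \<Delta>"
      using \<delta> face_in_fan unfolding maximal_cone_def by blast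
    then have "height \<sigma> \<tau> g < 1"
      using height_lt_1[OF \<sigma> _ 3(2)] t(1) by blast
    moreover have "height \<sigma> \<tau> g = representation \<sigma> g t + height \<sigma> (insert t \<tau>) g"
      using t by (intro height_insert[OF \<sigma>_basis]) auto
    moreover have "\<bar>representation \<sigma> g t\<bar> = 1"
      using t 3 by (intro lattice_basis_exchange_coeff[OF \<sigma>_basis \<delta>_basis _ _ g]) auto
    ultimately have "height \<sigma> (insert t \<tau>) g < 2"
      by arith
    moreover obtain k where "height \<sigma> (insert t \<tau>) g = of_int k"
      using height_Ints[OF \<sigma>_basis lattice_basis_lattice_pt[OF \<delta>_basis g]] by (auto elim: Ints_cases)
    ultimately have "height \<sigma> (insert t \<tau>) g \<le> 1"
      by simp
    then show ?thesis
      using 3 g by (simp add: height_basis[OF \<delta>_basis])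
  qed
qed

lemma height_ray_le_1_insert:
  assumes \<sigma>: "maximal_cone \<Delta> \<sigma>" and t: "insert t \<tau> \<subseteq> \<sigma>" "t \<notin> \<tau>"
    and IH: "\<And>\<delta>. maximal_cone \<Delta> \<delta> \<Longrightarrow> \<tau> \<subseteq> \<delta> \<Longrightarrow> height \<delta> \<tau> s \<le> 1"
  shows "height \<sigma> (insert t \<tau>) s \<le> 1"
proof (rule ccontr)
  \<comment> \<open>Push the barycentre p of the wall sigma - {t} slightly towards s, into a maximal cone delta.
    The two heights agree at p and, by induction, height delta tau is smaller at s; but on the
    generators of delta it is the larger one.\<close>
  assume gt: "\<not> height \<sigma> (insert t \<tau>) s \<le> 1"
  note \<sigma>_basis = maximal_cone_lattice_basis[OF \<sigma>]
  define p where "p = (\<Sum>x\<in>\<sigma> - {t}. x)"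
  have "\<sigma> - {t} \<in> \<Delta>"
    using \<sigma> face_in_fan unfolding maximal_cone_def by blast
  then obtain l \<delta> where l: "0 < l" "l \<le> 1" and \<delta>: "maximal_cone \<Delta> \<delta>" "\<sigma> - {t} \<subseteq> \<delta>"
    and y: "(1 - l) *\<^sub>R p + l *\<^sub>R s \<in> pos_hull \<delta>"
    unfolding p_def by (rule ex_maximal_cone_towards)
  note \<delta>_basis = maximal_cone_lattice_basis[OF \<delta>(1)]
  let ?h = "height \<sigma> (insert t \<tau>)" and ?h' = "height \<delta> \<tau>"
  have "?h' g = ?h g" if "g \<in> \<sigma> - {t}" for g
    using that \<delta>(2) by (auto simp: height_basis[OF \<sigma>_basis] height_basis[OF \<delta>_basis])
  then have "?h' p = ?h p"
    unfolding p_def by (simp add: real_vector.linear_sum[OF linear_height[OF \<delta>_basis]]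
        real_vector.linear_sum[OF linear_height[OF \<sigma>_basis]])
  moreover have "?h' s \<le> 1"
    using t \<delta> by (intro IH) auto
  ultimately have "?h' ((1 - l) *\<^sub>R p + l *\<^sub>R s) < ?h ((1 - l) *\<^sub>R p + l *\<^sub>R s)"
    using gt l(1) linear_height[OF \<sigma>_basis] linear_height[OF \<delta>_basis]
    by (simp add: linear_add linear_cmul)
  moreover have "?h ((1 - l) *\<^sub>R p + l *\<^sub>R s) \<le> ?h' ((1 - l) *\<^sub>R p + l *\<^sub>R s)"
    using t \<delta> by (intro pos_hull_linear_le[OF linear_height[OF \<sigma>_basis] linear_height[OF \<delta>_basis] _ y]
        height_le_height_adjacent[OF \<sigma>]) auto
  ultimately show False
    by simp
qed

lemma height_ray_le_1:
  assumes "maximal_cone \<Delta> \<sigma>" "T \<subseteq> \<sigma>" "{s} \<in> \<Delta>"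
  shows "height \<sigma> T s \<le> 1"
proof -
  have "finite T"
    using assms(1,2) finite_cone finite_subset unfolding maximal_cone_def by blast
  then show ?thesis
    using assms(1,2)
  proof (induction T arbitrary: \<sigma> rule: finite_induct)
    case (empty \<sigma>)
    then show ?case
      using height_lt_1[OF empty(1), of "{}" s] assms(3)
      by (cases "s \<in> \<sigma>") (auto simp: height_basis[OF maximal_cone_lattice_basis[OF empty(1)]])
  next
    case (insert t \<tau> \<sigma>)
    then show ?case
      by (intro height_ray_le_1_insert) auto
  qed
qed

lemma ray_representation:
  assumes \<sigma>: "maximal_cone \<Delta> \<sigma>" and s: "{s} \<in> \<Delta>"
  shows representation_ray_le_1: "representation \<sigma> s b \<le> 1"
    and representation_ray_pos_unique:
      "0 < representation \<sigma> s b \<Longrightarrow> 0 < representation \<sigma> s b' \<Longrightarrow> b = b'"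
proof -
  let ?r = "representation \<sigma> s"
  define P where "P = {b\<in>\<sigma>. 0 < ?r b}"
  have fin: "finite P"
    using \<sigma> finite_cone unfolding P_def maximal_cone_def by auto
  have "\<sigma> - (\<sigma> - P) = P"
    unfolding P_def by auto
  then have sum_le_1: "sum ?r P \<le> 1"
    using height_ray_le_1[OF \<sigma> _ s, of "\<sigma> - P"] unfolding height_def by simp
  have ge_1: "1 \<le> ?r b" if "b \<in> P" for b
  proof -
    have "?r b \<in> \<int>"
      using lattice_basis_representation_Ints[OF maximal_cone_lattice_basis[OF \<sigma>] lattice_pt_ray[OF s]] .
    moreover have "0 < ?r b"
      using that unfolding P_def by simp
    ultimately show ?thesis
      using Ints_nonzero_abs_ge1[of "?r b"] by simp
  qed
  have pos_in_P: "b \<in> P" if "0 < ?r b" for b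
    using that real_vector.representation_ne_zero[of \<sigma> s b] unfolding P_def by auto
  show "?r b \<le> 1"
  proof (cases "0 < ?r b")
    case True
    then have "?r b \<le> sum ?r P"
      using fin pos_in_P by (intro member_le_sum) (auto dest: ge_1)
    then show ?thesis
      using sum_le_1 by simp
  qed simp
  have "real (card P) \<le> sum ?r P"
    using ge_1 sum_mono[of P "\<lambda>_. 1" ?r] by simp
  then have "card P \<le> Suc 0"
    using sum_le_1 by simp
  then show "b = b'" if "0 < ?r b" "0 < ?r b'"
    using pos_in_P[OF that(1)] pos_in_P[OF that(2)] card_le_Suc0_iff_eq[OF fin] by blast
qed

end

lemma independent_card_le_card_positive_support:
  fixes B S :: "'a::real_vector set"
  assumes B: "finite B" "independent B" and S: "independent S" "S \<subseteq> span B"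
    and nonneg: "\<And>b. 0 \<le> representation B (\<Sum>s\<in>S. s) b"
  shows "card S \<le> card {b. \<exists>s\<in>S. 0 < representation B s b}"
proof -
  let ?r = "representation B"
  define J where "J = {b. \<exists>s\<in>S. 0 < ?r s b}"
  have fin_S: "finite S"
    using real_vector.independent_span_bound[OF B(1) S] by blast
  have "J \<subseteq> B"
  proof
    fix b assume "b \<in> J"
    then obtain s where "0 < ?r s b"
      unfolding J_def by blast
    then show "b \<in> B"
      by (intro real_vector.representation_ne_zero[of B s]) simp
  qed
  then have fin_J: "finite J"
    using B(1) finite_subset by blast
  have zero: "?r s b = 0" if "s \<in> S" "b \<notin> J" for s b
  proof -
    have nonneg_neg: "\<forall>s\<in>S. 0 \<le> - ?r s b"
      using that(2) unfolding J_def by auto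
    have "?r (\<Sum>s\<in>S. s) b = (\<Sum>s\<in>S. ?r s b)"
      using S(2) B(2) by (subst real_vector.representation_sum) auto
    then have "(\<Sum>s\<in>S. - ?r s b) \<le> 0"
      using nonneg[of b] by (simp add: sum_negf)
    moreover have "0 \<le> (\<Sum>s\<in>S. - ?r s b)"
      using nonneg_neg by (simp add: sum_nonneg)
    ultimately have "(\<Sum>s\<in>S. - ?r s b) = 0"
      by linarith
    then have "\<forall>s\<in>S. - ?r s b = 0"
      using nonneg_neg by (subst (asm) sum_nonneg_eq_0_iff[OF fin_S]) auto
    then show ?thesis
      using that(1) by simp
  qed
  have "s \<in> span J" if "s \<in> S" for s
  proof -
    have "s \<in> span B"
      using that S(2) by blast
    then have "s = (\<Sum>b\<in>B. ?r s b *\<^sub>R b)"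
      using B by (simp add: real_vector.sum_representation_eq)
    also have "\<dots> = (\<Sum>b\<in>J. ?r s b *\<^sub>R b)"
      using B(1) \<open>J \<subseteq> B\<close> zero[OF that] by (intro sum.mono_neutral_right) auto
    also have "\<dots> \<in> span J"
      by (intro real_vector.span_sum real_vector.span_scale real_vector.span_base)
    finally show ?thesis .
  qed
  then have "S \<subseteq> span J"
    by blast
  then show ?thesis
    using real_vector.independent_span_bound[OF fin_J S(1)] unfolding J_def by simp
qed

lemma independent_sum_representation_le_1:
  fixes B S :: "'a::real_vector set"
  assumes B: "finite B" "independent B" and S: "independent S" "S \<subseteq> span B"
    and nonneg: "\<And>b. 0 \<le> representation B (\<Sum>s\<in>S. s) b"
    and le_1: "\<And>s b. s \<in> S \<Longrightarrow> representation B s b \<le> 1"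
    and pos_unique: "\<And>s b b'. s \<in> S \<Longrightarrow> 0 < representation B s b \<Longrightarrow>
      0 < representation B s b' \<Longrightarrow> b = b'"
  shows "representation B (\<Sum>s\<in>S. s) b \<le> 1"
proof (rule ccontr)
  \<comment> \<open>Sending each s to its positive coordinate maps onto the positive support, so by the
    previous lemma it is injective; a coordinate of the sum above 1 would need two such s.\<close>
  assume gt: "\<not> representation B (\<Sum>s\<in>S. s) b \<le> 1"
  let ?r = "representation B"
  define P where "P = {s\<in>S. \<exists>b. 0 < ?r s b}"
  define pos where "pos s = (SOME b. 0 < ?r s b)" for s
  have fin_S: "finite S"
    using real_vector.independent_span_bound[OF B(1) S] by blast
  then have fin_P: "finite P"
    unfolding P_def by auto
  have pos: "0 < ?r s (pos s)" if "s \<in> P" for s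
    using that unfolding P_def pos_def by (auto intro: someI_ex)
  have pos_eq: "pos s = b" if "s \<in> S" "0 < ?r s b" for s b
    using that pos pos_unique unfolding P_def by blast
  have "pos ` P = {b. \<exists>s\<in>S. 0 < ?r s b}"
    using pos pos_eq unfolding P_def by fastforce
  then have "card P \<le> card (pos ` P)"
    using independent_card_le_card_positive_support[OF B S nonneg] card_mono[OF fin_S, of P]
    unfolding P_def by auto
  then have inj: "inj_on pos P"
    using card_image_le[OF fin_P, of pos] by (intro eq_card_imp_inj_on[OF fin_P]) linarith
  have "?r (\<Sum>s\<in>S. s) b = (\<Sum>s\<in>S. ?r s b)"
    using S(2) B(2) by (subst real_vector.representation_sum) auto
  then have "1 < (\<Sum>s\<in>S. ?r s b)"
    using gt by simp
  also have "\<dots> \<le> (\<Sum>s\<in>S. if 0 < ?r s b then 1 else 0)"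
    using le_1 by (intro sum_mono) auto
  also have "\<dots> = real (card {s\<in>S. 0 < ?r s b})"
    using fin_S by (simp add: sum.If_cases Int_def)
  finally have "\<not> card {s\<in>S. 0 < ?r s b} \<le> Suc 0"
    by linarith
  then obtain s1 s2 where "s1 \<in> S" "s2 \<in> S" "0 < ?r s1 b" "0 < ?r s2 b" "s1 \<noteq> s2"
    using card_le_Suc0_iff_eq[of "{s\<in>S. 0 < ?r s b}"] fin_S by auto
  moreover have "s1 \<in> P" "s2 \<in> P"
    using calculation unfolding P_def by auto
  ultimately show False
    using inj pos_eq unfolding inj_on_def by metis
qed

theorem lemma3p4:
  fixes \<Delta> :: "(real^'n) set set"
    and \<sigma> :: "(real^'n) set"
    and a :: "real^'n \<Rightarrow> int"
    and \<rho>1 :: "real^'n"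
    and S :: "(real^'n) set"
  assumes fan: "complete_smooth_fan \<Delta>"
    and fano_all: "\<forall>\<tau>\<in>\<Delta>. fano_orbit_closure \<Delta> \<tau>"
    and cone: "\<sigma> \<in> \<Delta>"
    and a_ge1: "\<forall>\<rho>\<in>\<sigma>. a \<rho> \<ge> 1"
    and rho1: "\<rho>1 \<in> \<sigma>" and a_ge2: "a \<rho>1 \<ge> 2"
    and S_rays: "S \<subseteq> ray_gens \<Delta>"
    and S_indep: "independent S"
  shows "(\<Sum>\<rho>\<in>S. \<rho>) \<noteq> (\<Sum>\<rho>\<in>\<sigma>. of_int (a \<rho>) *\<^sub>R \<rho>)"
proof
  assume eq: "(\<Sum>\<rho>\<in>S. \<rho>) = (\<Sum>\<rho>\<in>\<sigma>. of_int (a \<rho>) *\<^sub>R \<rho>)"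
  interpret hereditarily_fano_fan \<Delta>
    using fan fano_all
    by (simp add: hereditarily_fano_fan_def hereditarily_fano_fan_axioms_def smooth_complete_fan_def)
  obtain \<sigma>' where \<sigma>': "maximal_cone \<Delta> \<sigma>'" "\<sigma> \<subseteq> \<sigma>'"
    using ex_maximal_cone_superset[OF cone] by blast
  note basis = lattice_basisD[OF maximal_cone_lattice_basis[OF \<sigma>'(1)]]
  have rays: "{s} \<in> \<Delta>" if "s \<in> S" for s
    using that S_rays unfolding ray_gens_def by auto
  have coords: "representation \<sigma>' (\<Sum>\<rho>\<in>S. \<rho>) b = (if b \<in> \<sigma> then of_int (a b) else 0)" for b
    unfolding eq using basis(1,2) \<sigma>'(2) finite_subset by (intro representation_sum_scaleR) auto
  have "representation \<sigma>' (\<Sum>\<rho>\<in>S. \<rho>) \<rho>1 \<le> 1"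
  proof (rule independent_sum_representation_le_1[OF basis(1,2) S_indep])
    show "S \<subseteq> span \<sigma>'"
      using basis(4) by simp
    show "0 \<le> representation \<sigma>' (\<Sum>\<rho>\<in>S. \<rho>) b" for b
      using a_ge1 by (force simp: coords)
    show "representation \<sigma>' s b \<le> 1" if "s \<in> S" for s b
      using representation_ray_le_1[OF \<sigma>'(1) rays[OF that]] .
    show "b = b'" if "s \<in> S" "0 < representation \<sigma>' s b" "0 < representation \<sigma>' s b'" for s b b'
      using representation_ray_pos_unique[OF \<sigma>'(1) rays[OF that(1)]] that(2,3) .
  qed
  then show False
    using rho1 a_ge2 by (simp add: coords)
qed

end
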